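(* Let $\mathcal{P}$ be a declassification policy, with $\Delta^{\mathcal{P}}_P$, $\rho_{\mathcal{P}}$, $I[\cdot]$ and $I[\cdot]^{ev}$ as defined in the context. For every type $\tau$ with $\Delta^{\mathcal{P}}_P\vdash\tau$: $\langle v_1,v_2\rangle\in\mathcal{V}[\tau]_{\rho_{\mathcal{P}}}$ if and only if $\langle v_1,v_2\rangle\in I[\tau]$; and $\langle e_1,e_2\rangle\in\mathcal{E}[\tau]_{\rho_{\mathcal{P}}}$ if and only if $\langle e_1,e_2\rangle\in I[\tau]^{ev}$.
   Context: Language: simply typed call-by-value lambda calculus with types $\tau::=\mathbf{int}\mid\alpha\mid\tau_1\times\tau_2\mid\tau_1\to\tau_2$, values $v::=n\mid\langle v,v\rangle\mid\lambda x:\tau.e$, terms $e::=x\mid v\mid\langle e,e\rangle\mid\pi_ie\mid e_1e_2$ (plus terminating primitive arithmetic operators on $\mathbf{int}$), standard typing and call-by-value reduction ($\to^*$ its reflexive-transitive closure). $\Delta\vdash\tau$ means all type variables of $\tau$ lie in $\Delta$. Logical relation: for type substitutions $\delta_1,\delta_2$ (maps from type variables to closed types) and $\rho\in\mathrm{Rel}(\delta_1,\delta_2)$ (i.e. $\mathrm{dom}\rho=\mathrm{dom}\delta_i$ and $\rho(\alpha)$ is a binary relation between closed values of type $\delta_1(\alpha)$ and of type $\delta_2(\alpha)$): $\langle n,n\rangle\in\mathcal{V}[\mathbf{int}]_\rho$; $\langle\langle v_1,v_2\rangle,\langle v_1',v_2'\rangle\rangle\in\mathcal{V}[\tau_1\times\tau_2]_\rho$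 iff $\langle v_1,v_1'\rangle\in\mathcal{V}[\tau_1]_\rho$ and $\langle v_2,v_2'\rangle\in\mathcal{V}[\tau_2]_\rho$; $\langle v_1,v_2\rangle\in\mathcal{V}[\tau_1\to\tau_2]_\rho$ iff for all $\langle v_1',v_2'\rangle\in\mathcal{V}[\tau_1]_\rho$, $\langle v_1v_1',v_2v_2'\rangle\in\mathcal{E}[\tau_2]_\rho$; $\langle v_1,v_2\rangle\in\mathcal{V}[\alpha]_\rho$ iff $\langle v_1,v_2\rangle\in\rho(\alpha)$; $\langle e_1,e_2\rangle\in\mathcal{E}[\tau]_\rho$ iff $\vdash e_1:\delta_1(\tau)$, $\vdash e_2:\delta_2(\tau)$, $e_1\to^*v_1$, $e_2\to^*v_2$ and $\langle v_1,v_2\rangle\in\mathcal{V}[\tau]_\rho$. Policy $\mathcal{P}=\langle V_{\mathcal{P}},F_{\mathcal{P}}\rangle$: $V_{\mathcal{P}}$ finite set of confidential input variables; $F_{\mathcal{P}}$ partial map from $V_{\mathcal{P}}$ to closed declassification functions $f=\lambda x:\mathbf{int}.e$ of type $\mathbf{int}\to\tau_f$ with $\tau_f$ closed. $V_\top=V_{\mathcal{P}}\setminus\mathrm{dom}F_{\mathcal{P}}$; $\Delta^{\mathcal{P}}_P=\{\alpha_x\mid x\in V_\top\}\cup\{\alpha_f\mid F_{\mathcal{P}}(x)=f\}$ (fresh type variables); $\delta_{\mathcal{P}}$ maps each of them to $\mathbf{int}$. Indistinguishability, for $\Delta^{\mathcal{P}}_P\vdash\tau$: $\langle n,n\rangle\in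 I[\mathbf{int}]$; pairs componentwise at $\tau_1\times\tau_2$; $\langle v_1,v_2\rangle\in I[\tau_1\to\tau_2]$ iff for all $\langle v_1',v_2'\rangle\in I[\tau_1]$, $\langle v_1v_1',v_2v_2'\rangle\in I[\tau_2]^{ev}$; $\langle v_1,v_2\rangle\in I[\alpha_x]$ iff $\vdash v_1,v_2:\mathbf{int}$; $\langle v_1,v_2\rangle\in I[\alpha_f]$ iff $\vdash v_1,v_2:\mathbf{int}$ and $\langle f\,v_1,f\,v_2\rangle\in I[\tau_f]^{ev}$; $\langle e_1,e_2\rangle\in I[\tau]^{ev}$ iff $\vdash e_1,e_2:\delta_{\mathcal{P}}(\tau)$, $e_i\to^*v_i$ and $\langle v_1,v_2\rangle\in I[\tau]$. $\rho_{\mathcal{P}}(\alpha_x)=I[\alpha_x]$ and $\rho_{\mathcal{P}}(\alpha_f)=I[\alpha_f]$; the logical relation at $\rho_{\mathcal{P}}$ is taken with $\delta_1=\delta_2=\delta_{\mathcal{P}}$. *)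

theory Defs
  imports Main
begin

type_synonym var = nat

text \<open>Types, type variables and terms are mutually recursive: the fresh type
variables of a policy are indexed by a confidential variable (alpha_x) or by a
declassification function together with its result type (alpha_f).\<close>

datatype ty = TInt | TVar tyvar | TProd ty ty | TArr ty ty
and tyvar = TVN nat | AX var | AF tm ty
and tm = Var var | Num int | Pair tm tm | Fst tm | Snd tm
       | Lam var ty tm | App tm tm | Prim "int \<Rightarrow> int \<Rightarrow> int" tm tm

fun is_val :: "tm \<Rightarrow> bool" where
  "is_val (Num n) = True"
| "is_val (Pair v1 v2) = (is_val v1 \<and> is_val v2)"
| "is_val (Lam x T e) = True"
| "is_val _ = False"

text \<open>Substitution of (closed) values, as used by call-by-value reduction of closed terms.\<close>
fun subst :: "var \<Rightarrow> tm \<Rightarrow> tm \<Rightarrow> tm" where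
  "subst x v (Var y) = (if x = y then v else Var y)"
| "subst x v (Num n) = Num n"
| "subst x v (Pair e1 e2) = Pair (subst x v e1) (subst x v e2)"
| "subst x v (Fst e) = Fst (subst x v e)"
| "subst x v (Snd e) = Snd (subst x v e)"
| "subst x v (Lam y T e) = (if x = y then Lam y T e else Lam y T (subst x v e))"
| "subst x v (App e1 e2) = App (subst x v e1) (subst x v e2)"
| "subst x v (Prim f e1 e2) = Prim f (subst x v e1) (subst x v e2)"

inductive has_type :: "(var \<Rightarrow> ty option) \<Rightarrow> tm \<Rightarrow> ty \<Rightarrow> bool" where
  T_Var: "\<Gamma> x = Some T \<Longrightarrow> has_type \<Gamma> (Var x) T"
| T_Num: "has_type \<Gamma> (Num n) TInt"
| T_Pair: "has_type \<Gamma> e1 T1 \<Longrightarrow> has_type \<Gamma> e2 T2 \<Longrightarrow> has_type \<Gamma> (Pair e1 e2) (TProd T1 T2)"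
| T_Fst: "has_type \<Gamma> e (TProd T1 T2) \<Longrightarrow> has_type \<Gamma> (Fst e) T1"
| T_Snd: "has_type \<Gamma> e (TProd T1 T2) \<Longrightarrow> has_type \<Gamma> (Snd e) T2"
| T_Lam: "has_type (\<Gamma>(x \<mapsto> T1)) e T2 \<Longrightarrow> has_type \<Gamma> (Lam x T1 e) (TArr T1 T2)"
| T_App: "has_type \<Gamma> e1 (TArr T1 T2) \<Longrightarrow> has_type \<Gamma> e2 T1 \<Longrightarrow> has_type \<Gamma> (App e1 e2) T2"
| T_Prim: "has_type \<Gamma> e1 TInt \<Longrightarrow> has_type \<Gamma> e2 TInt \<Longrightarrow> has_type \<Gamma> (Prim f e1 e2) TInt"

abbreviation closed_typed :: "tm \<Rightarrow> ty \<Rightarrow> bool" where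
  "closed_typed e T \<equiv> has_type Map.empty e T"

inductive step :: "tm \<Rightarrow> tm \<Rightarrow> bool" where
  S_Beta: "is_val v \<Longrightarrow> step (App (Lam x T e) v) (subst x v e)"
| S_Fst: "is_val v1 \<Longrightarrow> is_val v2 \<Longrightarrow> step (Fst (Pair v1 v2)) v1"
| S_Snd: "is_val v1 \<Longrightarrow> is_val v2 \<Longrightarrow> step (Snd (Pair v1 v2)) v2"
| S_Prim: "step (Prim f (Num a) (Num b)) (Num (f a b))"
| S_Pair1: "step e1 e1' \<Longrightarrow> step (Pair e1 e2) (Pair e1' e2)"
| S_Pair2: "is_val v1 \<Longrightarrow> step e2 e2' \<Longrightarrow> step (Pair v1 e2) (Pair v1 e2')"
| S_FstC: "step e e' \<Longrightarrow> step (Fst e) (Fst e')"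
| S_SndC: "step e e' \<Longrightarrow> step (Snd e) (Snd e')"
| S_App1: "step e1 e1' \<Longrightarrow> step (App e1 e2) (App e1' e2)"
| S_App2: "is_val v1 \<Longrightarrow> step e2 e2' \<Longrightarrow> step (App v1 e2) (App v1 e2')"
| S_Prim1: "step e1 e1' \<Longrightarrow> step (Prim f e1 e2) (Prim f e1' e2)"
| S_Prim2: "is_val v1 \<Longrightarrow> step e2 e2' \<Longrightarrow> step (Prim f v1 e2) (Prim f v1 e2')"

abbreviation steps :: "tm \<Rightarrow> tm \<Rightarrow> bool" where
  "steps \<equiv> step\<^sup>*\<^sup>*"

fun ftv :: "ty \<Rightarrow> tyvar set" where
  "ftv TInt = {}"
| "ftv (TVar a) = {a}"
| "ftv (TProd T1 T2) = ftv T1 \<union> ftv T2"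
| "ftv (TArr T1 T2) = ftv T1 \<union> ftv T2"

definition wf_ty :: "tyvar set \<Rightarrow> ty \<Rightarrow> bool" where
  "wf_ty \<Delta> T \<longleftrightarrow> ftv T \<subseteq> \<Delta>"

type_synonym tsubst = "tyvar \<Rightarrow> ty option"

fun tsubst :: "tsubst \<Rightarrow> ty \<Rightarrow> ty" where
  "tsubst \<delta> TInt = TInt"
| "tsubst \<delta> (TVar a) = (case \<delta> a of Some T \<Rightarrow> T | None \<Rightarrow> TVar a)"
| "tsubst \<delta> (TProd T1 T2) = TProd (tsubst \<delta> T1) (tsubst \<delta> T2)"
| "tsubst \<delta> (TArr T1 T2) = TArr (tsubst \<delta> T1) (tsubst \<delta> T2)"

definition ev_rel :: "tsubst \<Rightarrow> tsubst \<Rightarrow> (tm \<times> tm) set \<Rightarrow> ty \<Rightarrow> (tm \<times> tm) set" where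
  "ev_rel \<delta>1 \<delta>2 R T = {(e1, e2). closed_typed e1 (tsubst \<delta>1 T) \<and> closed_typed e2 (tsubst \<delta>2 T) \<and>
      (\<exists>v1 v2. steps e1 v1 \<and> is_val v1 \<and> steps e2 v2 \<and> is_val v2 \<and> (v1, v2) \<in> R)}"

fun LV :: "tsubst \<Rightarrow> tsubst \<Rightarrow> (tyvar \<Rightarrow> (tm \<times> tm) set) \<Rightarrow> ty \<Rightarrow> (tm \<times> tm) set" where
  "LV \<delta>1 \<delta>2 \<rho> TInt = {(Num n, Num n) | n. True}"
| "LV \<delta>1 \<delta>2 \<rho> (TProd T1 T2) = {(Pair v1 v2, Pair v1' v2') | v1 v2 v1' v2'.
      (v1, v1') \<in> LV \<delta>1 \<delta>2 \<rho> T1 \<and> (v2, v2') \<in> LV \<delta>1 \<delta>2 \<rho> T2}"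
| "LV \<delta>1 \<delta>2 \<rho> (TArr T1 T2) = {(v1, v2). is_val v1 \<and> is_val v2 \<and>
      (\<forall>v1' v2'. (v1', v2') \<in> LV \<delta>1 \<delta>2 \<rho> T1 \<longrightarrow>
         (App v1 v1', App v2 v2') \<in> ev_rel \<delta>1 \<delta>2 (LV \<delta>1 \<delta>2 \<rho> T2) T2)}"
| "LV \<delta>1 \<delta>2 \<rho> (TVar a) = \<rho> a"

definition LE :: "tsubst \<Rightarrow> tsubst \<Rightarrow> (tyvar \<Rightarrow> (tm \<times> tm) set) \<Rightarrow> ty \<Rightarrow> (tm \<times> tm) set" where
  "LE \<delta>1 \<delta>2 \<rho> T = ev_rel \<delta>1 \<delta>2 (LV \<delta>1 \<delta>2 \<rho> T) T"

record policy =
  VP :: "var set"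
  FP :: "var \<Rightarrow> tm option"

definition closed_ty :: "ty \<Rightarrow> bool" where
  "closed_ty T \<longleftrightarrow> ftv T = {}"

definition wf_policy :: "policy \<Rightarrow> bool" where
  "wf_policy P \<longleftrightarrow> finite (VP P) \<and> dom (FP P) \<subseteq> VP P \<and>
     (\<forall>x f. FP P x = Some f \<longrightarrow>
        (\<exists>y e. f = Lam y TInt e) \<and> (\<exists>T. closed_typed f (TArr TInt T) \<and> closed_ty T))"

definition Vtop :: "policy \<Rightarrow> var set" where
  "Vtop P = VP P - dom (FP P)"

definition DeltaP :: "policy \<Rightarrow> tyvar set" where
  "DeltaP P = {AX x | x. x \<in> Vtop P} \<union>
     {AF f T | f T. (\<exists>x. FP P x = Some f) \<and> closed_typed f (TArr TInt T)}"

definition deltaP :: "policy \<Rightarrow> tsubst" where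
  "deltaP P a = (if a \<in> DeltaP P then Some TInt else None)"

fun Ind :: "policy \<Rightarrow> ty \<Rightarrow> (tm \<times> tm) set" where
  "Ind P TInt = {(Num n, Num n) | n. True}"
| "Ind P (TProd T1 T2) = {(Pair v1 v2, Pair v1' v2') | v1 v2 v1' v2'.
      (v1, v1') \<in> Ind P T1 \<and> (v2, v2') \<in> Ind P T2}"
| "Ind P (TArr T1 T2) = {(v1, v2). is_val v1 \<and> is_val v2 \<and>
      (\<forall>v1' v2'. (v1', v2') \<in> Ind P T1 \<longrightarrow>
         (App v1 v1', App v2 v2') \<in> ev_rel (deltaP P) (deltaP P) (Ind P T2) T2)}"
| "Ind P (TVar (AX x)) = {(v1, v2). is_val v1 \<and> is_val v2 \<and>
      closed_typed v1 TInt \<and> closed_typed v2 TInt}"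
| "Ind P (TVar (AF f Tf)) = {(v1, v2). is_val v1 \<and> is_val v2 \<and>
      closed_typed v1 TInt \<and> closed_typed v2 TInt \<and>
      (App f v1, App f v2) \<in> ev_rel (deltaP P) (deltaP P) (Ind P Tf) Tf}"
| "Ind P (TVar (TVN n)) = {}"

definition IndEv :: "policy \<Rightarrow> ty \<Rightarrow> (tm \<times> tm) set" where
  "IndEv P T = ev_rel (deltaP P) (deltaP P) (Ind P T) T"

definition rhoP :: "policy \<Rightarrow> tyvar \<Rightarrow> (tm \<times> tm) set" where
  "rhoP P a = (if a \<in> DeltaP P then Ind P (TVar a) else {})"

end

theory Submission
  imports Defs
begin

text \<open>The two relations are defined by the same clauses at base, product and
arrow types, the arrow clauses even using the same evaluation closure under
deltaP P; they can only differ at type variables, where rhoP P is by definition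
the indistinguishability relation. Hence a structural induction on the type
identifies them, and the statement about terms follows by applying the common
evaluation closure.\<close>

lemma LV_eq_Ind_if_rho_agrees:
  assumes "\<And>a. a \<in> ftv T \<Longrightarrow> \<rho> a = Ind P (TVar a)"
  shows "LV (deltaP P) (deltaP P) \<rho> T = Ind P T"
  using assms by (induction T rule: ftv.induct) simp_all

lemma rhoP_agrees_with_Ind:
  assumes "a \<in> DeltaP P"
  shows "rhoP P a = Ind P (TVar a)"
  using assms by (simp add: rhoP_def)

lemma LV_rhoP_eq_Ind:
  assumes "wf_ty (DeltaP P) T"
  shows "LV (deltaP P) (deltaP P) (rhoP P) T = Ind P T"
  using assms by (intro LV_eq_Ind_if_rho_agrees rhoP_agrees_with_Ind) (auto simp: wf_ty_def)

theorem lemma3: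
  assumes "wf_policy P"
    and "wf_ty (DeltaP P) \<tau>"
  shows "(\<forall>v1 v2. (v1, v2) \<in> LV (deltaP P) (deltaP P) (rhoP P) \<tau> \<longleftrightarrow> (v1, v2) \<in> Ind P \<tau>) \<and>
         (\<forall>e1 e2. (e1, e2) \<in> LE (deltaP P) (deltaP P) (rhoP P) \<tau> \<longleftrightarrow> (e1, e2) \<in> IndEv P \<tau>)"
proof -
  have LV_eq: "LV (deltaP P) (deltaP P) (rhoP P) \<tau> = Ind P \<tau>"
    using assms(2) by (rule LV_rhoP_eq_Ind)
  then have "LE (deltaP P) (deltaP P) (rhoP P) \<tau> = IndEv P \<tau>"
    by (simp add: LE_def IndEv_def)
  with LV_eq show ?thesis by simp
qed

end
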